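(* For $d\in\mathbb{N}$ let $\zeta_d\in\mathbb{C}$ be a primitive $d$-th root of unity. The following are equivalent: (i) for every $n\in\mathbb{N}$ the number of frieze patterns of height $n$ over $\mathbb{Z}[\zeta_d]\setminus\{0\}$ is finite; (ii) $\mathbb{Z}[\zeta_d]$ is a discrete subset of $\mathbb{C}$; (iii) the group of units of $\mathbb{Z}[\zeta_d]$ is finite; (iv) $d\in\{1,2,3,4,6\}$.
   Context: A frieze pattern of height $n$ over $S\subseteq\mathbb{C}$ is a family $(c_{i,j})_{i\in\mathbb{Z},\ i\le j\le i+n+3}$ of complex numbers such that: - $c_{i,i}=c_{i,i+n+3}=0$ and $c_{i,i+1}=c_{i,i+n+2}=1$; - $c_{i,j}\in S$ for $i+2\le j\le i+n+1$; - every adjacent $2\times2$ determinant $c_{i,j}c_{i+1,j+1}-c_{i,j+1}c_{i+1,j}$ (all entries defined) equals $1$. *)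

theory Defs
  imports "HOL-Analysis.Analysis" "HOL-Computational_Algebra.Polynomial"
begin

definition primitive_root_unity :: "nat \<Rightarrow> complex \<Rightarrow> bool" where
  "primitive_root_unity d z \<longleftrightarrow> d > 0 \<and> z ^ d = 1 \<and> (\<forall>k. 0 < k \<and> k < d \<longrightarrow> z ^ k \<noteq> 1)"

definition int_adjoin :: "complex \<Rightarrow> complex set" where
  "int_adjoin z = {poly (map_poly of_int p) z | p :: int poly. True}"

definition units_in :: "complex set \<Rightarrow> complex set" where
  "units_in R = {u \<in> R. \<exists>v \<in> R. u * v = 1}"

definition frieze_dom :: "nat \<Rightarrow> int \<Rightarrow> int \<Rightarrow> bool" where
  "frieze_dom n i j \<longleftrightarrow> i \<le> j \<and> j \<le> i + int n + 3"

definition is_frieze :: "nat \<Rightarrow> complex set \<Rightarrow> (int \<Rightarrow> int \<Rightarrow> complex) \<Rightarrow> bool" where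
  "is_frieze n S c \<longleftrightarrow>
     (\<forall>i. c i i = 0 \<and> c i (i + int n + 3) = 0 \<and> c i (i + 1) = 1 \<and> c i (i + int n + 2) = 1) \<and>
     (\<forall>i j. i + 2 \<le> j \<and> j \<le> i + int n + 1 \<longrightarrow> c i j \<in> S) \<and>
     (\<forall>i j. frieze_dom n i j \<and> frieze_dom n (i+1) (j+1) \<and> frieze_dom n i (j+1) \<and> frieze_dom n (i+1) j
        \<longrightarrow> c i j * c (i+1) (j+1) - c i (j+1) * c (i+1) j = 1)"

text \<open>Frieze patterns as families indexed by the domain only: we normalise
  the (irrelevant) values outside the domain to 0, so that distinct
  elements of this set are distinct frieze patterns.\<close>
definition friezes :: "nat \<Rightarrow> complex set \<Rightarrow> (int \<Rightarrow> int \<Rightarrow> complex) set" where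
  "friezes n S = {c. is_frieze n S c \<and> (\<forall>i j. \<not> frieze_dom n i j \<longrightarrow> c i j = 0)}"

end

theory Submission
  imports Defs
begin

text \<open>A frieze over a set \<open>S\<close> with \<open>0 \<notin> S\<close> is determined by its first two rows, which
  form a polygon of vectors in \<open>\<complex>\<^sup>2\<close> with consecutive wedges 1 and diagonal wedges in
  \<open>S\<close>. If \<open>S\<close> meets every disc in finitely many points there are only finitely many
  such polygons: some ear is bounded, and cutting it off (with a rescaling) leaves a
  smaller polygon of the same kind. For \<open>d \<in> {1, 2, 3, 4, 6}\<close> the ring \<open>\<int>[\<zeta>]\<close> is a
  lattice \<open>\<int> + \<int>\<zeta>\<close> whose nonzero elements have modulus at least 1, which yields all
  three finiteness properties. For every other \<open>d\<close> a cyclotomic unit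
  \<open>(1 - \<zeta>\<^sup>k) / (1 - \<zeta>)\<close> has modulus different from 1, so there is a unit \<open>w\<close> with
  \<open>\<bar>w\<bar> < 1\<close>: its powers accumulate at 0, are infinitely many units, and give
  infinitely many friezes of height 1, whose nontrivial row alternates \<open>2 w\<^sup>k\<close> and
  \<open>w\<^sup>-\<^sup>k\<close>.\<close>

definition wedge :: "complex \<times> complex \<Rightarrow> complex \<times> complex \<Rightarrow> complex" where
  "wedge p q = fst p * snd q - snd p * fst q"

definition scale_pair :: "complex \<Rightarrow> complex \<times> complex \<Rightarrow> complex \<times> complex" where
  "scale_pair c p = (c * fst p, c * snd p)"

lemma wedge_scale_pair: "wedge (scale_pair a p) (scale_pair b q) = a * b * wedge p q"
  by (simp add: wedge_def scale_pair_def algebra_simps)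

lemma wedge_self [simp]: "wedge p p = 0"
  by (simp add: wedge_def algebra_simps)

lemma wedge_commute: "wedge q p = - wedge p q"
  by (simp add: wedge_def algebra_simps)

text \<open>The three-term Pluecker relation among the \<open>2 \<times> 2\<close> minors of four vectors.\<close>

lemma wedge_exchange:
  assumes "wedge a b = 1" "wedge b c = 1"
  shows "wedge p c = wedge a c * wedge p b - wedge p a"
  using assms unfolding wedge_def by algebra

lemma finite_image_factor:
  assumes "finite (f ` A)" and "\<And>a b. a \<in> A \<Longrightarrow> b \<in> A \<Longrightarrow> f a = f b \<Longrightarrow> g a = g b"
  shows "finite (g ` A)"
proof -
  have "g a = g (inv_into A f (f a))" if "a \<in> A" for a
    using assms(2)[of a "inv_into A f (f a)"] that by (simp add: inv_into_into f_inv_into_f)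
  then have "g ` A \<subseteq> (\<lambda>y. g (inv_into A f y)) ` f ` A"
    by auto
  then show ?thesis
    using assms(1) finite_subset by blast
qed

definition finite_in_balls :: "complex set \<Rightarrow> bool" where
  "finite_in_balls S \<longleftrightarrow> (\<forall>r. finite (S \<inter> cball 0 r))"

lemma finite_in_balls_set_times:
  assumes "finite C" "0 \<notin> C" "finite_in_balls S"
  shows "finite_in_balls (C * S)"
  unfolding finite_in_balls_def
proof
  fix r
  define R where "R = (\<Sum>c\<in>C. \<bar>r\<bar> / cmod c)"
  have "C * S \<inter> cball 0 r \<subseteq> C * (S \<inter> cball 0 R)"
  proof
    fix y assume "y \<in> C * S \<inter> cball 0 r"
    then obtain c s where y: "y = c * s" "c \<in> C" "s \<in> S" "cmod (c * s) \<le> r"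
      by (auto elim: set_times_elim)
    then have "cmod s * cmod c \<le> \<bar>r\<bar>"
      by (simp add: norm_mult mult.commute)
    moreover have "c \<noteq> 0"
      using assms(2) y(2) by auto
    ultimately have "cmod s \<le> \<bar>r\<bar> / cmod c"
      by (simp add: pos_le_divide_eq)
    also have "\<dots> \<le> R"
      unfolding R_def using assms(1) y(2) by (intro member_le_sum) auto
    finally show "y \<in> C * (S \<inter> cball 0 R)"
      using y by auto
  qed
  moreover have "finite (C * (S \<inter> cball 0 R))"
    using assms unfolding finite_in_balls_def by (intro finite_set_times) auto
  ultimately show "finite (C * S \<inter> cball 0 r)"
    by (rule finite_subset)
qed

lemma zero_notin_set_times:
  fixes C S :: "'a::semiring_no_zero_divisors set"
  assumes "0 \<notin> C" "0 \<notin> S"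
  shows "0 \<notin> C * S"
  using assms by (auto elim: set_times_elim)

section \<open>Unimodular polygons\<close>

text \<open>Polygons coming from friezes have \<open>E = {1}\<close>; cutting off an ear rescales the
  closing wedge, which is why it is only required to lie in \<open>E\<close>.\<close>

definition unimodular_polygon ::
    "nat \<Rightarrow> complex set \<Rightarrow> complex set \<Rightarrow> (nat \<Rightarrow> complex \<times> complex) \<Rightarrow> bool" where
  "unimodular_polygon m S E v \<longleftrightarrow>
     (\<forall>j. Suc j < m \<longrightarrow> wedge (v j) (v (Suc j)) = 1) \<and> wedge (v 0) (v (m - 1)) \<in> E \<and>
     (\<forall>i j. i + 2 \<le> j \<and> j < m \<and> \<not> (i = 0 \<and> j = m - 1) \<longrightarrow> wedge (v i) (v j) \<in> S)"

definition wedge_table :: "nat \<Rightarrow> (nat \<Rightarrow> complex \<times> complex) \<Rightarrow> nat \<Rightarrow> nat \<Rightarrow> complex" where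
  "wedge_table m v i j = (if i < m \<and> j < m then wedge (v i) (v j) else 0)"

context
  fixes m S E v
  assumes polygon: "unimodular_polygon m S E v"
begin

lemma polygon_edge: "Suc j < m \<Longrightarrow> wedge (v j) (v (Suc j)) = 1"
  using polygon unfolding unimodular_polygon_def by blast

lemma polygon_closing: "wedge (v 0) (v (m - 1)) \<in> E"
  using polygon unfolding unimodular_polygon_def by blast

lemma polygon_diagonal:
  "i + 2 \<le> j \<Longrightarrow> j < m \<Longrightarrow> \<not> (i = 0 \<and> j = m - 1) \<Longrightarrow> wedge (v i) (v j) \<in> S"
  using polygon unfolding unimodular_polygon_def by blast

lemma polygon_wedge_at_ear:
  assumes "1 \<le> k" "Suc k < m" "wedge (v (k - 1)) (v (k + 1)) = x" "x \<noteq> 0"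
  shows "wedge p (v k) = (wedge p (v (k + 1)) + wedge p (v (k - 1))) / x"
proof -
  have "wedge (v (k - 1)) (v k) = 1" "wedge (v k) (v (Suc k)) = 1"
    using polygon_edge[of "k - 1"] polygon_edge[of k] assms by simp_all
  then have "wedge p (v (k + 1)) = x * wedge p (v k) - wedge p (v (k - 1))"
    using wedge_exchange[of "v (k - 1)" "v k" "v (Suc k)" p] assms(3) by simp
  then show ?thesis
    using assms(4) by (simp add: field_simps)
qed

end

lemma three_term_recurrence_growth:
  fixes w a :: "nat \<Rightarrow> complex" and A :: real
  assumes "w 0 = 0" "w 1 = 1" "2 \<le> A"
    and recurrence: "\<And>j. 1 \<le> j \<Longrightarrow> j < N \<Longrightarrow> w (Suc j) = a j * w j - w (j - 1)"
    and large: "\<And>j. 1 \<le> j \<Longrightarrow> j < N \<Longrightarrow> A \<le> cmod (a j)"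
    and "2 \<le> j" "j \<le> N"
  shows "A \<le> cmod (w j)"
proof -
  have "cmod (w (j - 1)) \<le> cmod (w j) \<and> 1 \<le> cmod (w j) \<and> (2 \<le> j \<longrightarrow> A \<le> cmod (w j))"
    if "1 \<le> j" "j \<le> N" for j
    using that
  proof (induction j rule: nat_induct_at_least)
    case base
    then show ?case using assms(1,2) by simp
  next
    case (Suc j)
    then have IH: "cmod (w (j - 1)) \<le> cmod (w j)" "1 \<le> cmod (w j)" "2 \<le> j \<longrightarrow> A \<le> cmod (w j)"
      by simp_all
    have "cmod (a j * w j) - cmod (w (j - 1)) \<le> cmod (w (Suc j))"
      using recurrence[of j] Suc by (metis Suc_le_eq norm_triangle_ineq2)
    moreover have "A * cmod (w j) \<le> cmod (a j * w j)"
      using large[of j] Suc by (simp add: norm_mult mult_right_mono)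
    ultimately have step: "A * cmod (w j) - cmod (w (j - 1)) \<le> cmod (w (Suc j))"
      by linarith
    show ?case
    proof (cases "j = 1")
      case True
      then show ?thesis using step assms(1-3) by simp
    next
      case False
      then have "A \<le> cmod (w j)" using IH Suc.hyps by simp
      moreover have "cmod (w j) \<le> (A - 1) * cmod (w j)"
        using mult_right_mono[of 1 "A - 1" "cmod (w j)"] assms(3) by simp
      ultimately show ?thesis using step IH assms(3) by (simp add: left_diff_distrib)
    qed
  qed
  then show ?thesis using assms(6,7) by simp
qed

text \<open>If every ear \<open>wedge (v (k - 1)) (v (k + 1))\<close> were large, the wedges
  \<open>wedge (v 0) (v j)\<close> would grow along the exchange recurrence, so the closing one
  could not be small.\<close>

lemma polygon_small_ear:
  assumes polygon: "unimodular_polygon m S E v" and "3 \<le> m"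
  shows "\<exists>k. 1 \<le> k \<and> k + 2 \<le> m \<and>
           cmod (wedge (v (k - 1)) (v (k + 1))) < 2 + cmod (wedge (v 0) (v (m - 1)))"
proof (rule ccontr)
  let ?A = "2 + cmod (wedge (v 0) (v (m - 1)))"
  assume "\<not> ?thesis"
  then have large: "?A \<le> cmod (wedge (v (j - 1)) (v (j + 1)))" if "1 \<le> j" "j < m - 1" for j
    using that by force
  have "?A \<le> cmod (wedge (v 0) (v (m - 1)))"
  proof (rule three_term_recurrence_growth[where a = "\<lambda>j. wedge (v (j - 1)) (v (j + 1))"])
    show "wedge (v 0) (v 1) = 1"
      using polygon_edge[OF polygon, of 0] assms(2) by simp
    show "wedge (v 0) (v (Suc j)) = wedge (v (j - 1)) (v (j + 1)) * wedge (v 0) (v j) - wedge (v 0) (v (j - 1))"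
      if "1 \<le> j" "j < m - 1" for j
      using wedge_exchange[of "v (j - 1)" "v j" "v (Suc j)" "v 0"] that
        polygon_edge[OF polygon, of "j - 1"] polygon_edge[OF polygon, of j] by simp
  qed (use large assms(2) in auto)
  then show False by simp
qed

text \<open>Deleting vertex \<open>k\<close> joins \<open>v (k - 1)\<close> to \<open>v (k + 1)\<close>, whose wedge is the ear \<open>x\<close>
  instead of 1; rescaling the later vertices alternately by \<open>inverse x\<close> and \<open>x\<close>
  restores unimodularity.\<close>

definition skip :: "nat \<Rightarrow> nat \<Rightarrow> nat" where
  "skip k j = (if j < k then j else Suc j)"

definition ear_scale :: "nat \<Rightarrow> complex \<Rightarrow> nat \<Rightarrow> complex" where
  "ear_scale k x j = (if j < k then 1 else if even (j - k) then inverse x else x)"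

definition cut_ear ::
    "nat \<Rightarrow> complex \<Rightarrow> (nat \<Rightarrow> complex \<times> complex) \<Rightarrow> nat \<Rightarrow> complex \<times> complex" where
  "cut_ear k x v j = scale_pair (ear_scale k x j) (v (skip k j))"

lemma wedge_cut_ear:
  "wedge (cut_ear k x v i) (cut_ear k x v j) =
     ear_scale k x i * ear_scale k x j * wedge (v (skip k i)) (v (skip k j))"
  by (simp add: cut_ear_def wedge_scale_pair)

lemma cut_ear_polygon:
  assumes polygon: "unimodular_polygon (Suc m) S E v" and k: "1 \<le> k" "k + 1 \<le> m"
    and x: "wedge (v (k - 1)) (v (k + 1)) = x" "x \<noteq> 0"
  shows "unimodular_polygon m ({1, x, inverse x, x * x, inverse x * inverse x} * S)
           ({x, inverse x} * E) (cut_ear k x v)"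
  unfolding unimodular_polygon_def
proof (intro conjI allI impI)
  fix j assume j: "Suc j < m"
  consider "Suc j < k" | "Suc j = k" | "k \<le> j" by linarith
  then show "wedge (cut_ear k x v j) (cut_ear k x v (Suc j)) = 1"
  proof cases
    case 1
    then show ?thesis
      using polygon_edge[OF polygon, of j] j by (simp add: wedge_cut_ear skip_def ear_scale_def)
  next
    case 2
    then have "skip k j = k - 1" "skip k (Suc j) = k + 1"
      "ear_scale k x j = 1" "ear_scale k x (Suc j) = inverse x"
      by (auto simp: skip_def ear_scale_def)
    then show ?thesis using x by (simp add: wedge_cut_ear)
  next
    case 3
    then have "skip k j = Suc j" "skip k (Suc j) = Suc (Suc j)"
      "ear_scale k x j * ear_scale k x (Suc j) = 1"
      using x(2) by (auto simp: skip_def ear_scale_def Suc_diff_le)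
    then show ?thesis
      using polygon_edge[OF polygon, of "Suc j"] j by (simp add: wedge_cut_ear)
  qed
next
  have "skip k 0 = 0" "ear_scale k x 0 = 1" "skip k (m - 1) = m"
    "ear_scale k x (m - 1) \<in> {x, inverse x}"
    using k by (auto simp: skip_def ear_scale_def)
  then show "wedge (cut_ear k x v 0) (cut_ear k x v (m - 1)) \<in> {x, inverse x} * E"
    using polygon_closing[OF polygon] by (auto simp: wedge_cut_ear)
next
  fix i j assume ij: "i + 2 \<le> j \<and> j < m \<and> \<not> (i = 0 \<and> j = m - 1)"
  have "ear_scale k x i * ear_scale k x j \<in> {1, x, inverse x, x * x, inverse x * inverse x}"
    using x(2) by (auto simp: ear_scale_def)
  moreover have "wedge (v (skip k i)) (v (skip k j)) \<in> S"
    using ij k by (intro polygon_diagonal[OF polygon]) (auto simp: skip_def)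
  ultimately show "wedge (cut_ear k x v i) (cut_ear k x v j) \<in>
      {1, x, inverse x, x * x, inverse x * inverse x} * S"
    unfolding wedge_cut_ear by (rule set_times_intro)
qed

lemma cut_ear_determines_table:
  assumes v: "unimodular_polygon (Suc m) S E v" and v': "unimodular_polygon (Suc m) S E v'"
    and k: "1 \<le> k" "k + 1 \<le> m"
    and x: "wedge (v (k - 1)) (v (k + 1)) = x" "wedge (v' (k - 1)) (v' (k + 1)) = x" "x \<noteq> 0"
    and cut: "wedge_table m (cut_ear k x v) = wedge_table m (cut_ear k x v')"
  shows "wedge_table (Suc m) v = wedge_table (Suc m) v'"
proof -
  have away: "wedge (v i) (v j) = wedge (v' i) (v' j)"
    if "i < Suc m" "j < Suc m" "i \<noteq> k" "j \<noteq> k" for i j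
  proof -
    define i' j' where "i' = (if i < k then i else i - 1)" and "j' = (if j < k then j else j - 1)"
    have "i' < m" "j' < m" "skip k i' = i" "skip k j' = j"
      using that k by (auto simp: i'_def j'_def skip_def)
    moreover have "ear_scale k x i' * ear_scale k x j' \<noteq> 0"
      using x(3) by (simp add: ear_scale_def)
    ultimately show ?thesis
      using fun_cong[OF fun_cong[OF cut, of i'], of j'] by (simp add: wedge_table_def wedge_cut_ear)
  qed
  have at_ear: "wedge (v i) (v k) = wedge (v' i) (v' k)" if "i < Suc m" "i \<noteq> k" for i
    using polygon_wedge_at_ear[OF v k(1) _ x(1,3)] polygon_wedge_at_ear[OF v' k(1) _ x(2,3)]
      away[of i "k + 1"] away[of i "k - 1"] that k by simp
  show ?thesis
  proof (intro ext)
    fix i j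
    show "wedge_table (Suc m) v i j = wedge_table (Suc m) v' i j"
      using away[of i j] at_ear[of i] at_ear[of j] wedge_commute[of "v k" "v j"]
        wedge_commute[of "v' k" "v' j"]
      by (cases "i = k"; cases "j = k") (auto simp: wedge_table_def)
  qed
qed

lemma triangle_determines_table:
  assumes v: "unimodular_polygon 3 S E v" and v': "unimodular_polygon 3 S E v'"
    and closing: "wedge (v 0) (v 2) = wedge (v' 0) (v' 2)"
  shows "wedge_table 3 v = wedge_table 3 v'"
proof (intro ext)
  fix i j :: nat
  have edges: "wedge (u 0) (u 1) = 1" "wedge (u 1) (u 0) = -1"
    "wedge (u 1) (u 2) = 1" "wedge (u 2) (u 1) = -1" "wedge (u 2) (u 0) = - wedge (u 0) (u 2)"
    if "unimodular_polygon 3 S E u" for u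
  proof -
    show "wedge (u 0) (u 1) = 1" "wedge (u 1) (u 2) = 1"
      using polygon_edge[OF that, of 0] polygon_edge[OF that, of 1] by (simp_all add: numeral_2_eq_2)
    then show "wedge (u 1) (u 0) = -1" "wedge (u 2) (u 1) = -1" "wedge (u 2) (u 0) = - wedge (u 0) (u 2)"
      by (metis wedge_commute)+
  qed
  have "i = 0 \<or> i = 1 \<or> i = 2" "j = 0 \<or> j = 1 \<or> j = 2" if "i < 3" "j < 3"
    using that by arith+
  then show "wedge_table 3 v i j = wedge_table 3 v' i j"
    using edges[OF v] edges[OF v'] closing unfolding wedge_table_def
    by (cases "i < 3 \<and> j < 3") (auto simp del: One_nat_def)
qed

lemma polygon_bounded_ear:
  assumes v: "unimodular_polygon (Suc m) S E v" and "3 \<le> m" "finite E"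
  shows "\<exists>k\<in>{1..m - 1}. wedge (v (k - 1)) (v (k + 1)) \<in> S \<inter> cball 0 (2 + (\<Sum>e\<in>E. cmod e))"
proof -
  obtain k where k: "1 \<le> k" "k + 2 \<le> Suc m"
    and small: "cmod (wedge (v (k - 1)) (v (k + 1))) < 2 + cmod (wedge (v 0) (v m))"
    using polygon_small_ear[OF v] assms(2) by auto
  have "cmod (wedge (v 0) (v m)) \<le> (\<Sum>e\<in>E. cmod e)"
    using polygon_closing[OF v] assms(3) by (intro member_le_sum) auto
  moreover have "wedge (v (k - 1)) (v (k + 1)) \<in> S"
    using k assms(2) by (intro polygon_diagonal[OF v]) auto
  ultimately show ?thesis
    using k small by force
qed

lemma finite_polygon_tables_fixed_ear:
  assumes "finite (wedge_table m ` {u. unimodular_polygon m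
             ({1, x, inverse x, x * x, inverse x * inverse x} * S) ({x, inverse x} * E) u})"
    and "1 \<le> k" "k + 1 \<le> m" "x \<noteq> 0"
  shows "finite (wedge_table (Suc m) `
           {v. unimodular_polygon (Suc m) S E v \<and> wedge (v (k - 1)) (v (k + 1)) = x})"
proof -
  let ?P = "{v. unimodular_polygon (Suc m) S E v \<and> wedge (v (k - 1)) (v (k + 1)) = x}"
  have "(wedge_table m \<circ> cut_ear k x) ` ?P \<subseteq> wedge_table m ` {u. unimodular_polygon m
      ({1, x, inverse x, x * x, inverse x * inverse x} * S) ({x, inverse x} * E) u}"
  proof (rule image_subsetI)
    fix v assume "v \<in> ?P"
    then show "(wedge_table m \<circ> cut_ear k x) v \<in> wedge_table m ` {u. unimodular_polygon m
        ({1, x, inverse x, x * x, inverse x * inverse x} * S) ({x, inverse x} * E) u}"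
      using cut_ear_polygon[of m S E v k x] assms(2-4) by auto
  qed
  then have "finite ((wedge_table m \<circ> cut_ear k x) ` ?P)"
    using assms(1) finite_subset by blast
  then show ?thesis
  proof (rule finite_image_factor)
    fix v v' assume "v \<in> ?P" "v' \<in> ?P"
      and "(wedge_table m \<circ> cut_ear k x) v = (wedge_table m \<circ> cut_ear k x) v'"
    then show "wedge_table (Suc m) v = wedge_table (Suc m) v'"
      using cut_ear_determines_table[of m S E v v' k x] assms(2-4) by auto
  qed
qed

theorem finite_polygon_tables:
  assumes "3 \<le> m" "0 \<notin> S" "finite_in_balls S" "finite E"
  shows "finite (wedge_table m ` {v. unimodular_polygon m S E v})"
  using assms
proof (induction m arbitrary: S E rule: nat_induct_at_least)
  case base
  have "(\<lambda>v. wedge (v 0) (v 2)) ` {v. unimodular_polygon 3 S E v} \<subseteq> E"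
    using polygon_closing by fastforce
  then have "finite ((\<lambda>v. wedge (v 0) (v 2)) ` {v. unimodular_polygon 3 S E v})"
    using base.prems(3) finite_subset by blast
  then show ?case
    by (rule finite_image_factor) (auto intro: triangle_determines_table)
next
  case (Suc m)
  define X where "X = S \<inter> cball 0 (2 + (\<Sum>e\<in>E. cmod e))"
  define P where "P k x = {v. unimodular_polygon (Suc m) S E v \<and> wedge (v (k - 1)) (v (k + 1)) = x}"
    for k x
  have "finite (wedge_table (Suc m) ` P k x)" if k: "k \<in> {1..m - 1}" and "x \<in> X" for k x
  proof -
    let ?S = "{1, x, inverse x, x * x, inverse x * inverse x} * S"
    have "x \<noteq> 0"
      using \<open>x \<in> X\<close> Suc.prems(1) unfolding X_def by auto
    then have "0 \<notin> ?S"
      using Suc.prems(1) by (intro zero_notin_set_times) auto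
    moreover have "finite_in_balls ?S"
      using \<open>x \<noteq> 0\<close> Suc.prems(2) by (intro finite_in_balls_set_times) auto
    moreover have "finite ({x, inverse x} * E)"
      using Suc.prems(3) by (intro finite_set_times) auto
    ultimately have "finite (wedge_table m ` {u. unimodular_polygon m ?S ({x, inverse x} * E) u})"
      by (rule Suc.IH)
    then show ?thesis
      unfolding P_def using k \<open>x \<noteq> 0\<close> Suc.hyps by (intro finite_polygon_tables_fixed_ear) auto
  qed
  moreover have "finite X"
    using Suc.prems(2) unfolding X_def finite_in_balls_def by blast
  ultimately have "finite (\<Union>k\<in>{1..m - 1}. \<Union>x\<in>X. wedge_table (Suc m) ` P k x)"
    by auto
  moreover have "{v. unimodular_polygon (Suc m) S E v} \<subseteq> (\<Union>k\<in>{1..m - 1}. \<Union>x\<in>X. P k x)"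
  proof
    fix v assume "v \<in> {v. unimodular_polygon (Suc m) S E v}"
    then obtain k where "k \<in> {1..m - 1}" "wedge (v (k - 1)) (v (k + 1)) \<in> X"
      using polygon_bounded_ear[of m S E v] Suc.hyps Suc.prems(3) unfolding X_def by auto
    then show "v \<in> (\<Union>k\<in>{1..m - 1}. \<Union>x\<in>X. P k x)"
      using \<open>v \<in> _\<close> unfolding P_def by auto
  qed
  then have "wedge_table (Suc m) ` {v. unimodular_polygon (Suc m) S E v} \<subseteq>
      (\<Union>k\<in>{1..m - 1}. \<Union>x\<in>X. wedge_table (Suc m) ` P k x)"
    by blast
  ultimately show ?case
    using finite_subset by blast
qed

section \<open>Friezes as unimodular polygons\<close>

locale nonzero_frieze =
  fixes n :: nat and S :: "complex set" and c :: "int \<Rightarrow> int \<Rightarrow> complex"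
  assumes frieze: "c \<in> friezes n S" and zero_notin: "0 \<notin> S"
begin

lemma boundary: "c i i = 0" "c i (i + int n + 3) = 0" "c i (i + 1) = 1" "c i (i + int n + 2) = 1"
  using frieze unfolding friezes_def is_frieze_def by auto

lemma entry_in: "i + 2 \<le> j \<Longrightarrow> j \<le> i + int n + 1 \<Longrightarrow> c i j \<in> S"
  using frieze unfolding friezes_def is_frieze_def by auto

lemma entry_outside: "\<not> (i \<le> j \<and> j \<le> i + int n + 3) \<Longrightarrow> c i j = 0"
  using frieze unfolding friezes_def frieze_dom_def by auto

lemma diamond:
  "i + 1 \<le> j \<Longrightarrow> j \<le> i + int n + 2 \<Longrightarrow> c i j * c (i + 1) (j + 1) - c i (j + 1) * c (i + 1) j = 1"
  using frieze unfolding friezes_def is_frieze_def frieze_dom_def by auto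

lemma entry_nonzero: "i + 1 \<le> j \<Longrightarrow> j \<le> i + int n + 2 \<Longrightarrow> c i j \<noteq> 0"
  using boundary entry_in[of i j] zero_notin
  by (cases "j = i + 1 \<or> j = i + int n + 2") auto

text \<open>Two diamonds sharing the nonzero entry \<open>c (i + 1) j\<close> give the linear recurrences
  along rows and columns, propagated from the boundary row of zeros.\<close>

lemma row_recurrence:
  assumes "i + 1 \<le> j" "j \<le> i + int n + 2"
  shows "c i (j - 1) + c i (j + 1) = c (j - 1) (j + 1) * c i j"
proof -
  have "c (j - 1 - int t) (j - 1) + c (j - 1 - int t) (j + 1) = c (j - 1) (j + 1) * c (j - 1 - int t) j"
    if "int t \<le> int n + 1" for t
    using that
  proof (induction t)
    case 0
    then show ?case using boundary[of "j - 1"] by simp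
  next
    case (Suc t)
    define i where "i = j - 1 - int (Suc t)"
    have i1: "j - 1 - int t = i + 1" unfolding i_def by simp
    have IH: "c (i + 1) (j - 1) + c (i + 1) (j + 1) = c (j - 1) (j + 1) * c (i + 1) j"
      using Suc unfolding i1 by simp
    have "c i j * c (i + 1) (j + 1) - c i (j + 1) * c (i + 1) j = 1"
      "c i (j - 1) * c (i + 1) j - c i j * c (i + 1) (j - 1) = 1"
      using diamond[of i j] diamond[of i "j - 1"] Suc.prems unfolding i_def by auto
    then have "c (i + 1) j * (c i (j - 1) + c i (j + 1)) = c i j * (c (i + 1) (j - 1) + c (i + 1) (j + 1))"
      by algebra
    then have "c (i + 1) j * (c i (j - 1) + c i (j + 1)) = c (i + 1) j * (c (j - 1) (j + 1) * c i j)"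
      unfolding IH by (simp add: ac_simps)
    moreover have "c (i + 1) j \<noteq> 0"
      using Suc.prems unfolding i_def by (intro entry_nonzero) auto
    ultimately show ?case
      unfolding i_def[symmetric] by simp
  qed
  from this[of "nat (j - 1 - i)"] assms show ?thesis by simp
qed

lemma column_recurrence:
  assumes "i + 1 \<le> j" "j \<le> i + int n + 2"
  shows "c (i - 1) j + c (i + 1) j = c (i - 1) (i + 1) * c i j"
proof -
  have "c (i - 1) (i + 1 + int t) + c (i + 1) (i + 1 + int t) = c (i - 1) (i + 1) * c i (i + 1 + int t)"
    if "int t \<le> int n + 1" for t
    using that
  proof (induction t)
    case 0
    then show ?case using boundary[of i] boundary[of "i + 1"] by simp
  next
    case (Suc t)
    define j where "j = i + 1 + int t"
    have j1: "i + 1 + int (Suc t) = j + 1" unfolding j_def by simp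
    have IH: "c (i - 1) j + c (i + 1) j = c (i - 1) (i + 1) * c i j"
      using Suc unfolding j_def by simp
    have "c (i - 1) j * c i (j + 1) - c (i - 1) (j + 1) * c i j = 1"
      "c i j * c (i + 1) (j + 1) - c i (j + 1) * c (i + 1) j = 1"
      using diamond[of "i - 1" j] diamond[of i j] Suc.prems unfolding j_def by auto
    then have "c i (j + 1) * (c (i - 1) j + c (i + 1) j) = c i j * (c (i - 1) (j + 1) + c (i + 1) (j + 1))"
      by algebra
    then have "c i j * (c (i - 1) (j + 1) + c (i + 1) (j + 1)) = c i j * (c (i - 1) (i + 1) * c i (j + 1))"
      using IH by algebra
    moreover have "c i j \<noteq> 0"
      using Suc.prems unfolding j_def by (intro entry_nonzero) auto
    ultimately show ?case
      unfolding j1 by (metis mult_left_cancel)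
  qed
  from this[of "nat (j - i - 1)"] assms show ?thesis by simp
qed

lemma entry_eq_first_rows:
  assumes "1 \<le> i" "i \<le> j" "j \<le> int n + 2"
  shows "c i j = c 0 i * c 1 j - c 1 i * c 0 j"
proof -
  have "(1 + int t \<le> j \<longrightarrow> c (1 + int t) j = c 0 (1 + int t) * c 1 j - c 1 (1 + int t) * c 0 j) \<and>
        (2 + int t \<le> j \<longrightarrow> c (2 + int t) j = c 0 (2 + int t) * c 1 j - c 1 (2 + int t) * c 0 j)" for t
  proof (induction t)
    case 0
    have "c 0 1 = 1" "c 1 1 = 0" "c 1 2 = 1"
      using boundary[of 0] boundary[of 1] by auto
    moreover have "2 \<le> j \<Longrightarrow> c 0 j + c 2 j = c 0 2 * c 1 j"
      using column_recurrence[of 1 j] assms by simp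
    ultimately show ?case by (auto simp: algebra_simps)
  next
    case (Suc t)
    have e: "1 + int (Suc t) = 2 + int t" "2 + int (Suc t) = 3 + int t" by auto
    define a where "a = c (1 + int t) (3 + int t)"
    have "c 0 (1 + int t) + c 0 (3 + int t) = a * c 0 (2 + int t)"
      "c 1 (1 + int t) + c 1 (3 + int t) = a * c 1 (2 + int t)"
      "c (1 + int t) j + c (3 + int t) j = a * c (2 + int t) j"
      if "3 + int t \<le> j"
      using row_recurrence[of 0 "2 + int t"] row_recurrence[of 1 "2 + int t"]
        column_recurrence[of "2 + int t" j] that assms
      unfolding a_def by (simp_all add: algebra_simps)
    moreover have "c (1 + int t) j = c 0 (1 + int t) * c 1 j - c 1 (1 + int t) * c 0 j"
      "c (2 + int t) j = c 0 (2 + int t) * c 1 j - c 1 (2 + int t) * c 0 j"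
      if "3 + int t \<le> j"
      using Suc.IH that by simp_all
    ultimately have "c (3 + int t) j = c 0 (3 + int t) * c 1 j - c 1 (3 + int t) * c 0 j"
      if "3 + int t \<le> j"
      using that by algebra
    then show ?case
      unfolding e using Suc.IH by simp
  qed
  from this[of "nat (i - 1)"] assms show ?thesis by auto
qed

text \<open>Vertex 0 is \<open>(1, 0)\<close>, not \<open>(- c 1 0, c 0 0) = (0, 0)\<close>: row 1 starts at column 1.\<close>

definition vertex :: "nat \<Rightarrow> complex \<times> complex" where
  "vertex j = (if j = 0 then (1, 0) else (- c 1 (int j), c 0 (int j)))"

lemma wedge_vertex: "i \<le> j \<Longrightarrow> j < n + 3 \<Longrightarrow> wedge (vertex i) (vertex j) = c (int i) (int j)"
  using boundary[of 0] entry_eq_first_rows[of "int i" "int j"]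
  by (cases "i = 0") (auto simp: vertex_def wedge_def algebra_simps)

lemma vertex_polygon: "unimodular_polygon (n + 3) S {1} vertex"
  unfolding unimodular_polygon_def
proof (intro conjI allI impI)
  fix j assume "Suc j < n + 3"
  then show "wedge (vertex j) (vertex (Suc j)) = 1"
    using wedge_vertex[of j "Suc j"] boundary(3)[of "int j"] by (simp add: add.commute)
next
  show "wedge (vertex 0) (vertex (n + 3 - 1)) \<in> {1}"
    using wedge_vertex[of 0 "n + 2"] boundary(4)[of 0] by (simp add: add.commute)
next
  fix i j assume ij: "i + 2 \<le> j \<and> j < n + 3 \<and> \<not> (i = 0 \<and> j = n + 3 - 1)"
  then have "int j \<le> int i + int n + 1"
    by (cases i) auto
  then show "wedge (vertex i) (vertex j) \<in> S"
    using ij wedge_vertex[of i j] entry_in[of "int i" "int j"] by simp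
qed


lemma first_row_eq_wedge_table: "c 0 j = wedge_table (n + 3) vertex 0 (nat j)"
proof (cases "0 \<le> j \<and> j < int n + 3")
  case True
  then have "nat j < n + 3"
    by (simp add: nat_less_iff)
  then show ?thesis
    using True wedge_vertex[of 0 "nat j"] by (simp add: wedge_table_def)
next
  case False
  then have "j < 0 \<or> j = 0 + int n + 3 \<or> int n + 3 < j"
    by auto
  then show ?thesis
    using boundary(2)[of 0] entry_outside[of 0 j] by (auto simp: wedge_table_def)
qed
end

lemma frieze_rows_agree_next:
  assumes "nonzero_frieze n S c" "nonzero_frieze n S c'" "\<forall>j. c i j = c' i j"
  shows "c (i + 1) j = c' (i + 1) j"
proof -
  interpret A: nonzero_frieze n S c by (rule assms(1))
  interpret B: nonzero_frieze n S c' by (rule assms(2))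
  have "c (i + 1) (i + 1 + int t) = c' (i + 1) (i + 1 + int t)" for t
  proof (induction t)
    case 0
    then show ?case using A.boundary B.boundary by simp
  next
    case (Suc t)
    consider "int t + 1 \<le> int n + 2" | "int t + 1 = int n + 3" | "int t + 1 > int n + 3"
      by linarith
    then show ?case
    proof cases
      case 1
      let ?j = "i + 1 + int t"
      have "c i ?j * c (i + 1) (?j + 1) - c i (?j + 1) * c (i + 1) ?j = 1"
        "c' i ?j * c' (i + 1) (?j + 1) - c' i (?j + 1) * c' (i + 1) ?j = 1"
        using 1 by (intro A.diamond B.diamond; simp)+
      moreover have "c i ?j = c' i ?j" "c i (?j + 1) = c' i (?j + 1)"
        using assms(3) by simp_all
      ultimately have "c i ?j * (c (i + 1) (?j + 1) - c' (i + 1) (?j + 1)) = 0"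
        using Suc.IH by algebra
      moreover have "c i ?j \<noteq> 0"
        using 1 by (intro A.entry_nonzero) auto
      ultimately show ?thesis
        by (simp add: add.assoc)
    next
      case 2
      then have "i + 1 + int (Suc t) = (i + 1) + int n + 3" by simp
      then show ?thesis by (simp only: A.boundary(2) B.boundary(2))
    next
      case 3
      then show ?thesis using A.entry_outside B.entry_outside by simp
    qed
  qed
  from this[of "nat (j - i - 1)"] show ?thesis
    using A.entry_outside B.entry_outside by (cases "j < i + 1") auto
qed

lemma frieze_rows_agree_prev:
  assumes "nonzero_frieze n S c" "nonzero_frieze n S c'" "\<forall>j. c i j = c' i j"
  shows "c (i - 1) j = c' (i - 1) j"
proof -
  interpret A: nonzero_frieze n S c by (rule assms(1))
  interpret B: nonzero_frieze n S c' by (rule assms(2))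
  have "c (i - 1) (i + int n + 2 - int t) = c' (i - 1) (i + int n + 2 - int t)" for t
  proof (induction t)
    case 0
    then show ?case using A.boundary[of "i - 1"] B.boundary[of "i - 1"] by (simp add: algebra_simps)
  next
    case (Suc t)
    define j where "j = i + int n + 2 - int (Suc t)"
    have j1: "i + int n + 2 - int t = j + 1" unfolding j_def by simp
    consider "i \<le> j" | "j = i - 1" | "j < i - 1" by linarith
    then have "c (i - 1) j = c' (i - 1) j"
    proof cases
      case 1
      have "j \<le> i + int n + 1" unfolding j_def by simp
      then have "c (i - 1) j * c i (j + 1) - c (i - 1) (j + 1) * c i j = 1"
        "c' (i - 1) j * c' i (j + 1) - c' (i - 1) (j + 1) * c' i j = 1"
        using 1 A.diamond[of "i - 1" j] B.diamond[of "i - 1" j] by auto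
      moreover have "c i j = c' i j" "c i (j + 1) = c' i (j + 1)"
        using assms(3) by simp_all
      ultimately have "c i (j + 1) * (c (i - 1) j - c' (i - 1) j) = 0"
        using Suc.IH unfolding j1 by algebra
      moreover have "c i (j + 1) \<noteq> 0"
        using 1 \<open>j \<le> i + int n + 1\<close> by (intro A.entry_nonzero) auto
      ultimately show ?thesis
        by simp
    next
      case 2
      then show ?thesis using A.boundary B.boundary by simp
    next
      case 3
      then show ?thesis using A.entry_outside B.entry_outside by simp
    qed
    then show ?case unfolding j_def .
  qed
  from this[of "nat (i + int n + 2 - j)"] show ?thesis
    using A.entry_outside B.entry_outside by (cases "j > i + int n + 2") auto
qed

lemma frieze_eq_if_row_0_eq:
  assumes "nonzero_frieze n S c" "nonzero_frieze n S c'" "\<forall>j. c 0 j = c' 0 j"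
  shows "c = c'"
proof -
  have "\<forall>j. c i j = c' i j" for i
  proof (induction i rule: int_induct[where k = 0])
    case base
    then show ?case using assms(3) by simp
  next
    case (step1 i)
    then show ?case using frieze_rows_agree_next[OF assms(1,2)] by blast
  next
    case (step2 i)
    then show ?case using frieze_rows_agree_prev[OF assms(1,2)] by blast
  qed
  then show ?thesis by (intro ext) auto
qed

theorem finite_friezes:
  assumes "0 \<notin> S" "finite_in_balls S"
  shows "finite (friezes n S)"
proof -
  have frieze: "nonzero_frieze n S c" if "c \<in> friezes n S" for c
    using that assms(1) by unfold_locales
  have "finite (wedge_table (n + 3) ` {v. unimodular_polygon (n + 3) S {1} v})"
    using assms by (intro finite_polygon_tables) auto
  moreover have "(\<lambda>c. wedge_table (n + 3) (nonzero_frieze.vertex c)) ` friezes n S \<subseteq>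
      wedge_table (n + 3) ` {v. unimodular_polygon (n + 3) S {1} v}"
    using nonzero_frieze.vertex_polygon[OF frieze] by blast
  ultimately have "finite ((\<lambda>c. wedge_table (n + 3) (nonzero_frieze.vertex c)) ` friezes n S)"
    using finite_subset by blast
  then have "finite (id ` friezes n S)"
  proof (rule finite_image_factor)
    fix c c' assume c: "c \<in> friezes n S" and c': "c' \<in> friezes n S"
      and "wedge_table (n + 3) (nonzero_frieze.vertex c) = wedge_table (n + 3) (nonzero_frieze.vertex c')"
    then have "\<forall>j. c 0 j = c' 0 j"
      using nonzero_frieze.first_row_eq_wedge_table[OF frieze] by metis
    then show "id c = id c'"
      using frieze_eq_if_row_0_eq[OF frieze[OF c] frieze[OF c']] by simp
  qed
  then show ?thesis by simp
qed

section \<open>The ring \<open>\<int>[z]\<close>\<close>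

lemma map_poly_of_int_add:
  "map_poly (of_int :: int \<Rightarrow> complex) (p + q) = map_poly of_int p + map_poly of_int q"
  by (intro poly_eqI) (simp add: coeff_map_poly)

lemma map_poly_of_int_diff:
  "map_poly (of_int :: int \<Rightarrow> complex) (p - q) = map_poly of_int p - map_poly of_int q"
  by (intro poly_eqI) (simp add: coeff_map_poly)

lemma map_poly_of_int_mult:
  "map_poly (of_int :: int \<Rightarrow> complex) (p * q) = map_poly of_int p * map_poly of_int q"
  by (intro poly_eqI) (simp add: coeff_map_poly coeff_mult)

lemma int_adjoin_iff: "x \<in> int_adjoin z \<longleftrightarrow> (\<exists>p. x = poly (map_poly of_int p) z)"
  unfolding int_adjoin_def by auto

lemma int_adjoin_add: "x \<in> int_adjoin z \<Longrightarrow> y \<in> int_adjoin z \<Longrightarrow> x + y \<in> int_adjoin z"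
  unfolding int_adjoin_iff by (metis map_poly_of_int_add poly_add)

lemma int_adjoin_diff: "x \<in> int_adjoin z \<Longrightarrow> y \<in> int_adjoin z \<Longrightarrow> x - y \<in> int_adjoin z"
  unfolding int_adjoin_iff by (metis map_poly_of_int_diff poly_diff)

lemma int_adjoin_mult: "x \<in> int_adjoin z \<Longrightarrow> y \<in> int_adjoin z \<Longrightarrow> x * y \<in> int_adjoin z"
  unfolding int_adjoin_iff by (metis map_poly_of_int_mult poly_mult)

lemma int_adjoin_of_int: "of_int k \<in> int_adjoin z"
  unfolding int_adjoin_iff by (rule exI[of _ "[:k:]"]) (simp add: map_poly_pCons)

lemma int_adjoin_generator: "z \<in> int_adjoin z"
  unfolding int_adjoin_iff by (rule exI[of _ "[:0, 1:]"]) (simp add: map_poly_pCons)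

lemma int_adjoin_0: "0 \<in> int_adjoin z"
  using int_adjoin_of_int[of 0] by simp

lemma int_adjoin_1: "1 \<in> int_adjoin z"
  using int_adjoin_of_int[of 1] by simp

lemma int_adjoin_uminus: "x \<in> int_adjoin z \<Longrightarrow> - x \<in> int_adjoin z"
  using int_adjoin_diff[OF int_adjoin_0] by fastforce

lemma int_adjoin_power: "x \<in> int_adjoin z \<Longrightarrow> x ^ k \<in> int_adjoin z"
  by (induction k) (auto intro: int_adjoin_1 int_adjoin_mult)

lemma int_adjoin_sum: "(\<And>i. i \<in> A \<Longrightarrow> f i \<in> int_adjoin z) \<Longrightarrow> sum f A \<in> int_adjoin z"
  by (induction A rule: infinite_finite_induct) (auto intro: int_adjoin_0 int_adjoin_add)

lemma primitive_root_unity_norm: "primitive_root_unity d z \<Longrightarrow> cmod z = 1"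
  unfolding primitive_root_unity_def using power_eq_1_iff by blast

section \<open>Quadratic orders: \<open>d \<in> {1, 2, 3, 4, 6}\<close>\<close>

lemma primitive_root_quadratic:
  assumes prim: "primitive_root_unity d z" and "d \<in> {1, 2, 3, 4, 6}"
  shows "\<exists>t::int. z\<^sup>2 = of_int t * z - 1"
proof -
  have root: "z ^ d = 1" and primitive: "\<And>k. 0 < k \<Longrightarrow> k < d \<Longrightarrow> z ^ k \<noteq> 1"
    using prim unfolding primitive_root_unity_def by auto
  consider "d = 1" | "d = 2" | "d = 3" | "d = 4" | "d = 6"
    using assms(2) by auto
  then show ?thesis
  proof cases
    case 1
    then have "z\<^sup>2 = of_int 2 * z - 1" using root by simp
    then show ?thesis by blast
  next
    case 2
    then have "z = -1"
      using root primitive[of 1] power2_eq_1_iff by auto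
    then have "z\<^sup>2 = of_int (-2) * z - 1" by simp
    then show ?thesis by blast
  next
    case 3
    have "(z - 1) * (z\<^sup>2 + z + 1) = 0"
      using root 3 by (simp add: algebra_simps power2_eq_square power3_eq_cube)
    then have "z\<^sup>2 + z + 1 = 0"
      using primitive[of 1] 3 by simp
    then have "z\<^sup>2 = of_int (-1) * z - 1"
      by (simp add: algebra_simps add_eq_0_iff2)
    then show ?thesis by blast
  next
    case 4
    have "(z\<^sup>2 - 1) * (z\<^sup>2 + 1) = 0"
      using root 4 by (simp add: algebra_simps power2_eq_square power4_eq_xxxx)
    then have "z\<^sup>2 = of_int 0 * z - 1"
      using primitive[of 2] 4 by (simp add: eq_neg_iff_add_eq_0)
    then show ?thesis by blast
  next
    case 5
    have "(z + 1) * (z\<^sup>2 - z + 1) * (z ^ 3 - 1) = z ^ 6 - 1"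
      by algebra
    then have "(z + 1) * (z\<^sup>2 - z + 1) * (z ^ 3 - 1) = 0"
      using root 5 by simp
    moreover have "z + 1 \<noteq> 0"
      using primitive[of 2] 5 by (auto simp: add_eq_0_iff2)
    ultimately have "z\<^sup>2 - z + 1 = 0"
      using primitive[of 3] 5 by simp
    then have "z\<^sup>2 = of_int 1 * z - 1"
      by (simp add: algebra_simps)
    then show ?thesis by blast
  qed
qed

context
  fixes z :: complex and t :: int
  assumes quadratic: "z\<^sup>2 = of_int t * z - 1"
begin

lemma int_adjoin_quadratic_elem:
  assumes "x \<in> int_adjoin z"
  shows "\<exists>a b :: int. x = of_int a + of_int b * z"
proof -
  have "\<exists>a b :: int. poly (map_poly of_int p) z = of_int a + of_int b * z" for p :: "int poly"
  proof (induction p)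
    case 0
    then show ?case by (intro exI[of _ 0]) simp
  next
    case (pCons c p)
    then obtain a b :: int where ab: "poly (map_poly of_int p) z = of_int a + of_int b * z"
      by blast
    have "poly (map_poly of_int (pCons c p)) z = of_int c + of_int a * z + of_int b * z\<^sup>2"
      by (simp add: map_poly_pCons ab algebra_simps power2_eq_square)
    also have "\<dots> = of_int (c - b) + of_int (a + b * t) * z"
      unfolding quadratic by (simp add: algebra_simps)
    finally show ?case by blast
  qed
  then show ?thesis
    using assms unfolding int_adjoin_iff by blast
qed

text \<open>Since \<open>cnj z = inverse z\<close>, the relation gives \<open>z + cnj z = t\<close>.\<close>

lemma norm_quadratic_elem_square:
  assumes "cmod z = 1"
  shows "(cmod (of_int a + of_int b * z))\<^sup>2 = of_int (a\<^sup>2 + t * a * b + b\<^sup>2)"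
proof -
  have zc: "z * cnj z = 1"
    using complex_norm_square[of z] assms by simp
  then have "z + cnj z = of_int t"
    using quadratic by (simp add: power2_eq_square field_simps) algebra
  moreover have "(of_int a + of_int b * z) * cnj (of_int a + of_int b * z) =
      of_int a * of_int a + of_int a * of_int b * (z + cnj z) + of_int b * of_int b * (z * cnj z)"
    by (simp add: algebra_simps)
  ultimately have "(of_int a + of_int b * z) * cnj (of_int a + of_int b * z) =
      complex_of_real (of_int (a\<^sup>2 + t * a * b + b\<^sup>2))"
    using zc by (simp add: power2_eq_square)
  then show ?thesis
    by (metis complex_norm_square of_real_eq_iff)
qed

lemma int_adjoin_norm_ge_1:
  assumes "cmod z = 1" "x \<in> int_adjoin z" "x \<noteq> 0"
  shows "1 \<le> cmod x"
proof -
  obtain a b :: int where ab: "x = of_int a + of_int b * z"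
    using int_adjoin_quadratic_elem[OF assms(2)] by blast
  then have "(cmod x)\<^sup>2 = of_int (a\<^sup>2 + t * a * b + b\<^sup>2)"
    using norm_quadratic_elem_square[OF assms(1)] by simp
  moreover have "0 < (cmod x)\<^sup>2"
    using assms(3) by simp
  ultimately have "0 < a\<^sup>2 + t * a * b + b\<^sup>2"
    by (metis of_int_0_less_iff)
  then have "1 \<le> (cmod x)\<^sup>2"
    using \<open>(cmod x)\<^sup>2 = _\<close> by linarith
  then show ?thesis
    by (simp add: power2_nonneg_ge_1_iff)
qed

end

context
  fixes z :: complex
  assumes norm_ge_1: "\<And>x. x \<in> int_adjoin z \<Longrightarrow> x \<noteq> 0 \<Longrightarrow> 1 \<le> cmod x"
begin

lemma uniform_discrete_int_adjoin: "uniform_discrete (int_adjoin z)"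
proof (rule uniformI1[of 1])
  fix x y assume "x \<in> int_adjoin z" "y \<in> int_adjoin z" "dist x y < 1"
  then show "x = y"
    using norm_ge_1[of "x - y"] int_adjoin_diff by (force simp: dist_norm)
qed simp

lemma finite_in_balls_int_adjoin: "finite_in_balls (int_adjoin z)"
  unfolding finite_in_balls_def
proof
  fix r
  have "uniform_discrete (int_adjoin z \<inter> cball 0 r)"
    using uniform_discrete_int_adjoin by (rule uniform_discrete_subset) blast
  then show "finite (int_adjoin z \<inter> cball 0 r)"
    using uniform_discrete_finite_iff bounded_subset[OF bounded_cball] by blast
qed

lemma finite_units_int_adjoin: "finite (units_in (int_adjoin z))"
proof -
  have "units_in (int_adjoin z) \<subseteq> int_adjoin z \<inter> cball 0 1"
  proof
    fix u assume "u \<in> units_in (int_adjoin z)"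
    then obtain v where uv: "u \<in> int_adjoin z" "v \<in> int_adjoin z" "u * v = 1"
      unfolding units_in_def by auto
    moreover have "v \<noteq> 0"
      using uv(3) by auto
    ultimately have "1 \<le> cmod v"
      using norm_ge_1 by blast
    then have "cmod u * 1 \<le> cmod u * cmod v"
      by (intro mult_left_mono) auto
    also have "\<dots> = 1"
      using uv(3) by (metis norm_mult norm_one)
    finally have "cmod u \<le> 1"
      by simp
    then show "u \<in> int_adjoin z \<inter> cball 0 1"
      using uv by simp
  qed
  then show ?thesis
    using finite_in_balls_int_adjoin finite_subset unfolding finite_in_balls_def by blast
qed

end

section \<open>Units off the unit circle: \<open>d \<notin> {1, 2, 3, 4, 6}\<close>\<close>

lemma unit_circle_eq_or_cnj_if_dist_1_eq:
  assumes "cmod a = 1" "cmod w = 1" "cmod (1 - a) = cmod (1 - w)"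
  shows "a = w \<or> a = cnj w"
proof -
  have "(1 - Re a)\<^sup>2 + (Im a)\<^sup>2 = (1 - Re w)\<^sup>2 + (Im w)\<^sup>2"
    using assms(3) by (metis cmod_power2 minus_complex.simps(1,2) one_complex.simps(1,2) power2_minus diff_0)
  moreover have "(Re a)\<^sup>2 + (Im a)\<^sup>2 = 1" "(Re w)\<^sup>2 + (Im w)\<^sup>2 = 1"
    using assms(1,2) by (simp_all flip: cmod_power2)
  ultimately have "Re a = Re w"
    by (simp add: power2_eq_square algebra_simps)
  moreover from this have "(Im a)\<^sup>2 = (Im w)\<^sup>2"
    using \<open>(Re a)\<^sup>2 + (Im a)\<^sup>2 = 1\<close> \<open>(Re w)\<^sup>2 + (Im w)\<^sup>2 = 1\<close> by simp
  ultimately show ?thesis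
    by (auto simp: complex_eq_iff power2_eq_iff)
qed

text \<open>\<open>u = 1 + w + \<dots> + w ^ (k - 1) = (1 - w ^ k) / (1 - w)\<close> is a cyclotomic unit, with
  inverse \<open>(1 - w) / (1 - w ^ k) = 1 + w ^ k + \<dots>\<close> since \<open>w\<close> is a power of \<open>w ^ k\<close>.\<close>

lemma cyclotomic_unit:
  assumes w: "w \<in> int_adjoin z" "cmod w = 1" "w \<noteq> 1"
    and kl: "w ^ (k * l) = w" "w ^ k \<noteq> w" "w ^ (k + 1) \<noteq> 1"
  shows "\<exists>u\<in>units_in (int_adjoin z). cmod u \<noteq> 1"
proof -
  define u where "u = (\<Sum>j<k. w ^ j)"
  define v where "v = (\<Sum>j<l. (w ^ k) ^ j)"
  have geometric: "1 - w ^ k = (1 - w) * u" "1 - (w ^ k) ^ l = (1 - w ^ k) * v"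
    unfolding u_def v_def by (rule one_diff_power_eq)+
  have "(1 - w) * (u * v) = 1 - w"
    using geometric kl(1) by (simp add: mult.assoc power_mult)
  then have "u * v = 1"
    using w(3) by simp
  moreover have "u \<in> int_adjoin z" "v \<in> int_adjoin z"
    unfolding u_def v_def by (intro int_adjoin_sum int_adjoin_power w(1))+
  moreover have "cmod u \<noteq> 1"
  proof
    assume "cmod u = 1"
    then have "cmod (1 - w ^ k) = cmod (1 - w)"
      unfolding geometric by (simp add: norm_mult)
    then consider "w ^ k = w" | "w ^ k = cnj w"
      using unit_circle_eq_or_cnj_if_dist_1_eq w(2) by (metis norm_power power_one)
    then show False
    proof cases
      case 1
      then show False using kl(2) by simp
    next
      case 2
      have "w ^ (k + 1) = cnj w * w"
        unfolding 2[symmetric] by simp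
      also have "\<dots> = 1"
        using complex_norm_square[of w] w(2) by (simp add: mult.commute)
      finally show False using kl(3) by simp
    qed
  qed
  ultimately show ?thesis
    unfolding units_in_def by blast
qed

lemma unit_off_circle_odd_order:
  assumes w: "w \<in> int_adjoin z" "primitive_root_unity e w" and e: "odd e" "5 \<le> e"
  shows "\<exists>u\<in>units_in (int_adjoin z). cmod u \<noteq> 1"
proof (rule cyclotomic_unit[OF w(1) primitive_root_unity_norm[OF w(2)], where k = 2 and l = "(e + 1) div 2"])
  have root: "w ^ e = 1" and primitive: "\<And>k. 0 < k \<Longrightarrow> k < e \<Longrightarrow> w ^ k \<noteq> 1"
    using w(2) unfolding primitive_root_unity_def by auto
  show "w \<noteq> 1" "w ^ (2 + 1) \<noteq> 1"
    using primitive[of 1] primitive[of 3] e(2) by auto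
  then show "w ^ 2 \<noteq> w"
    using primitive_root_unity_norm[OF w(2)] by (auto simp: power2_eq_square)
  have "2 * ((e + 1) div 2) = e + 1"
    using e(1) by simp
  then show "w ^ (2 * ((e + 1) div 2)) = w"
    using root by simp
qed

lemma primitive_root_unity_uminus:
  assumes prim: "primitive_root_unity (2 * e) z" and "odd e"
  shows "primitive_root_unity e (- z)"
proof -
  have root: "z ^ (2 * e) = 1" and primitive: "\<And>k. 0 < k \<Longrightarrow> k < 2 * e \<Longrightarrow> z ^ k \<noteq> 1"
    using prim unfolding primitive_root_unity_def by auto
  have "0 < e"
    using \<open>odd e\<close> by (simp add: odd_pos)
  have "(z ^ e)\<^sup>2 = 1"
    using root by (simp add: power_mult mult.commute)
  then have "z ^ e = -1"
    using primitive[of e] \<open>0 < e\<close> power2_eq_1_iff by auto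
  moreover have "(- z) ^ k \<noteq> 1" if "0 < k" "k < e" for k
  proof
    assume "(- z) ^ k = 1"
    then have "z ^ k = 1 \<or> z ^ k = -1"
      by (cases "even k") (simp_all add: power_minus_even power_minus_odd minus_equation_iff)
    then have "z ^ (2 * k) = 1"
      by (auto simp: power_mult mult.commute)
    then show False
      using primitive[of "2 * k"] that by simp
  qed
  ultimately show ?thesis
    using \<open>0 < e\<close> \<open>odd e\<close> unfolding primitive_root_unity_def by (simp add: power_minus_odd)
qed

text \<open>For \<open>k = d / 2 - 1\<close> we have \<open>k\<^sup>2 \<equiv> 1 (mod d)\<close> but \<open>k \<not>\<equiv> \<plusminus>1 (mod d)\<close>.\<close>

lemma unit_off_circle_four_dvd:
  assumes prim: "primitive_root_unity (4 * (s + 2)) z"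
  shows "\<exists>u\<in>units_in (int_adjoin z). cmod u \<noteq> 1"
proof -
  define d where "d = 4 * (s + 2)"
  define k where "k = 2 * s + 3"
  have root: "z ^ d = 1" and primitive: "\<And>k. 0 < k \<Longrightarrow> k < d \<Longrightarrow> z ^ k \<noteq> 1"
    using prim unfolding primitive_root_unity_def d_def by auto
  have kk: "k * k = d * (s + 1) + 1" "0 < k - 1" "k - 1 < d" "0 < k + 1" "k + 1 < d"
    unfolding k_def d_def by (simp_all add: algebra_simps)
  have "z ^ (k * k) = (z ^ d) ^ (s + 1) * z"
    unfolding kk by (simp add: power_add power_mult)
  then have "z ^ (k * k) = z"
    using root by simp
  moreover have "z ^ k \<noteq> z"
  proof
    assume "z ^ k = z"
    moreover have "z \<noteq> 0"
      using primitive_root_unity_norm[OF prim] by auto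
    ultimately have "z ^ (k - 1) = 1"
      using power_minus_mult[of k z] kk(2) by simp
    then show False
      using primitive[OF kk(2,3)] by simp
  qed
  moreover have "z \<noteq> 1"
    using primitive[of 1] unfolding d_def by simp
  ultimately show ?thesis
    using cyclotomic_unit[OF int_adjoin_generator primitive_root_unity_norm[OF prim]]
      primitive[OF kk(4,5)] by blast
qed

lemma unit_off_circle:
  assumes prim: "primitive_root_unity d z" and d: "d \<notin> {1, 2, 3, 4, 6}"
  shows "\<exists>u\<in>units_in (int_adjoin z). cmod u \<noteq> 1"
proof -
  have "0 < d" "d \<noteq> 1" "d \<noteq> 2" "d \<noteq> 3" "d \<noteq> 4" "d \<noteq> 6"
    using prim d unfolding primitive_root_unity_def by auto
  then have "odd d \<and> 5 \<le> d \<or> d = 2 * (d div 2) \<and> odd (d div 2) \<and> 5 \<le> d div 2 \<or>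
      d = 4 * (d div 4 - 2 + 2)"
    by presburger
  then consider "odd d" "5 \<le> d" | e where "d = 2 * e" "odd e" "5 \<le> e" | s where "d = 4 * (s + 2)"
    by blast
  then show ?thesis
  proof cases
    case 1
    then show ?thesis
      using unit_off_circle_odd_order[OF int_adjoin_generator prim] by blast
  next
    case (2 e)
    then show ?thesis
      using unit_off_circle_odd_order[OF int_adjoin_uminus[OF int_adjoin_generator]]
        primitive_root_unity_uminus prim by blast
  next
    case (3 s)
    then show ?thesis
      using unit_off_circle_four_dvd prim by blast
  qed
qed

lemma unit_norm_less_1:
  assumes "u \<in> units_in (int_adjoin z)" "cmod u \<noteq> 1"
  obtains w w' where "w \<in> int_adjoin z" "w' \<in> int_adjoin z" "w * w' = 1" "cmod w < 1"
proof -
  obtain v where uv: "u \<in> int_adjoin z" "v \<in> int_adjoin z" "u * v = 1"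
    using assms(1) unfolding units_in_def by auto
  then have "cmod u * cmod v = 1"
    by (metis norm_mult norm_one)
  have "cmod u < 1 \<or> cmod v < 1"
  proof (rule ccontr)
    assume not_less: "\<not> (cmod u < 1 \<or> cmod v < 1)"
    then have "cmod u * 1 \<le> cmod u * cmod v"
      by (intro mult_left_mono) auto
    then show False
      using \<open>cmod u * cmod v = 1\<close> not_less assms(2) by simp
  qed
  then show ?thesis
    using that uv by (metis mult.commute)
qed

lemma inj_power_norm_less_1:
  fixes w :: complex
  assumes "w \<noteq> 0" "cmod w < 1"
  shows "inj (\<lambda>k::nat. w ^ k)"
proof (rule injI)
  fix a b :: nat assume "w ^ a = w ^ b"
  then have "cmod w ^ a = cmod w ^ b"
    by (metis norm_power)
  then show "a = b"
    using assms by (metis linorder_neqE_nat order_less_irrefl power_strict_decreasing_iff zero_less_norm_iff)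
qed

lemma not_discrete_int_adjoin:
  assumes "w \<in> int_adjoin z" "w \<noteq> 0" "cmod w < 1"
  shows "\<not> discrete (int_adjoin z)"
proof
  assume "discrete (int_adjoin z)"
  then have "0 isolated_in int_adjoin z"
    using int_adjoin_0 discreteD by blast
  then obtain e where e: "e > 0" "\<And>y. y \<in> int_adjoin z \<Longrightarrow> dist 0 y < e \<Longrightarrow> y = 0"
    by (meson isolated_in_dist_Ex_iff)
  obtain k where "cmod w ^ k < e"
    using real_arch_pow_inv[OF e(1) assms(3)] by blast
  then have "dist 0 (w ^ k) < e"
    by (simp add: norm_power)
  then have "w ^ k = 0"
    by (rule e(2)[OF int_adjoin_power[OF assms(1)]])
  then show False
    using assms(2) by simp
qed

lemma infinite_units_int_adjoin:
  assumes "w \<in> int_adjoin z" "w' \<in> int_adjoin z" "w * w' = 1" "cmod w < 1"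
  shows "infinite (units_in (int_adjoin z))"
proof -
  have "range (\<lambda>k::nat. w ^ k) \<subseteq> units_in (int_adjoin z)"
  proof
    fix x assume "x \<in> range (\<lambda>k::nat. w ^ k)"
    then obtain k where "x = w ^ k" by auto
    moreover have "w ^ k * w' ^ k = 1"
      using assms(3) by (metis power_mult_distrib power_one)
    ultimately show "x \<in> units_in (int_adjoin z)"
      unfolding units_in_def using int_adjoin_power assms(1,2) by blast
  qed
  moreover have "w \<noteq> 0"
    using assms(3) by auto
  then have "infinite (range (\<lambda>k::nat. w ^ k))"
    using inj_power_norm_less_1 assms(4) by (simp add: infinite_UNIV_nat finite_image_iff)
  ultimately show ?thesis
    using finite_subset by blast
qed

text \<open>The only nontrivial diamond condition of a frieze of height 1 reads \<open>a * b - 1 = 1\<close>.\<close>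

definition height_one_frieze :: "complex \<Rightarrow> complex \<Rightarrow> int \<Rightarrow> int \<Rightarrow> complex" where
  "height_one_frieze a b i j =
     (if j = i + 1 \<or> j = i + 3 then 1 else if j = i + 2 then (if even i then a else b) else 0)"

lemma height_one_frieze_in_friezes:
  assumes "a * b = 2" "a \<in> S" "b \<in> S"
  shows "height_one_frieze a b \<in> friezes 1 S"
  unfolding friezes_def is_frieze_def
proof (intro CollectI conjI allI impI)
  fix i j :: int
  assume "frieze_dom 1 i j \<and> frieze_dom 1 (i + 1) (j + 1) \<and> frieze_dom 1 i (j + 1) \<and> frieze_dom 1 (i + 1) j"
  then have "j = i + 1 \<or> j = i + 2 \<or> j = i + 3"
    by (auto simp: frieze_dom_def)
  then show "height_one_frieze a b i j * height_one_frieze a b (i + 1) (j + 1) -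
      height_one_frieze a b i (j + 1) * height_one_frieze a b (i + 1) j = 1"
    using assms(1) by (cases "even i") (auto simp: height_one_frieze_def mult.commute)
qed (use assms in \<open>auto simp: height_one_frieze_def frieze_dom_def\<close>)

lemma infinite_height_one_friezes:
  assumes "w \<in> int_adjoin z" "w' \<in> int_adjoin z" "w * w' = 1" "cmod w < 1"
  shows "infinite (friezes 1 (int_adjoin z - {0}))"
proof -
  define F where "F k = height_one_frieze (2 * w ^ k) (w' ^ k)" for k :: nat
  have "w \<noteq> 0" "w' \<noteq> 0"
    using assms(3) by auto
  have "range F \<subseteq> friezes 1 (int_adjoin z - {0})"
  proof
    fix x assume "x \<in> range F"
    then obtain k where x: "x = F k" by auto
    have "w ^ k * w' ^ k = 1"
      using assms(3) by (metis power_mult_distrib power_one)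
    moreover have "2 * w ^ k \<in> int_adjoin z" "w' ^ k \<in> int_adjoin z"
      using int_adjoin_mult[OF int_adjoin_of_int[of 2] int_adjoin_power[OF assms(1)]]
        int_adjoin_power[OF assms(2)] by simp_all
    ultimately show "x \<in> friezes 1 (int_adjoin z - {0})"
      unfolding x F_def using \<open>w \<noteq> 0\<close> \<open>w' \<noteq> 0\<close>
      by (intro height_one_frieze_in_friezes) (auto simp: mult.assoc)
  qed
  moreover have "inj F"
  proof (rule injI)
    fix a b assume "F a = F b"
    then have "F a 0 2 = F b 0 2"
      by simp
    then have "w ^ a = w ^ b"
      by (simp add: F_def height_one_frieze_def)
    then show "a = b"
      using inj_power_norm_less_1[OF \<open>w \<noteq> 0\<close> assms(4)] by (simp add: inj_eq)
  qed
  then have "infinite (range F)"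
    by (simp add: infinite_UNIV_nat finite_image_iff)
  ultimately show ?thesis
    using finite_subset by blast
qed

theorem corollary3p10:
  fixes d :: nat and z :: complex
  assumes "primitive_root_unity d z"
  shows "((\<forall>n. finite (friezes n (int_adjoin z - {0}))) \<longleftrightarrow> discrete (int_adjoin z))
       \<and> (discrete (int_adjoin z) \<longleftrightarrow> finite (units_in (int_adjoin z)))
       \<and> (finite (units_in (int_adjoin z)) \<longleftrightarrow> d \<in> {1, 2, 3, 4, 6})"
proof (cases "d \<in> {1, 2, 3, 4, 6}")
  case True
  obtain t where "z\<^sup>2 = of_int t * z - 1"
    using primitive_root_quadratic[OF assms True] by blast
  then have norm_ge_1: "\<And>x. x \<in> int_adjoin z \<Longrightarrow> x \<noteq> 0 \<Longrightarrow> 1 \<le> cmod x"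
    using int_adjoin_norm_ge_1 primitive_root_unity_norm[OF assms] by blast
  then have "finite_in_balls (int_adjoin z - {0})"
    using finite_in_balls_int_adjoin[OF norm_ge_1] unfolding finite_in_balls_def
    by (meson Diff_subset Int_mono finite_subset order_refl)
  then have "finite (friezes n (int_adjoin z - {0}))" for n
    by (intro finite_friezes) auto
  then show ?thesis
    using True norm_ge_1 uniform_discrete_int_adjoin uniform_discrete_imp_discrete
      finite_units_int_adjoin by blast
next
  case False
  obtain u where "u \<in> units_in (int_adjoin z)" "cmod u \<noteq> 1"
    using unit_off_circle[OF assms False] by blast
  then obtain w w' where "w \<in> int_adjoin z" "w' \<in> int_adjoin z" "w * w' = 1" "cmod w < 1"
    by (rule unit_norm_less_1)
  then show ?thesis
    using False not_discrete_int_adjoin infinite_units_int_adjoin infinite_height_one_friezes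
    by (metis mult_zero_left zero_neq_one)
qed

end
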